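(* Let $(G,K)=(G_2,SU(3))$. For $X,Y\in\mathfrak g$, both $[\phi(X),\phi(Y)]=0$ and $[X_{\mathfrak k},Y_{\mathfrak k}]=0$ hold if and only if both $[X,Y]=0$ and $[X_{\mathfrak p},Y_{\mathfrak p}]=0$ hold.
   Context: $G_2=\operatorname{Aut}(\mathbb{O})\subseteq SO(7)$ is the automorphism group of the octonions acting on $\operatorname{Im}\mathbb{O}$, and $K=\{g\in G_2: g(i)=i\}\cong SU(3)$ for a fixed unit imaginary octonion $i$. Let $\mathfrak g$, $\mathfrak k$ be their Lie algebras, $\langle X,Y\rangle_0=-\operatorname{tr}(XY)$, $\mathfrak p$ the $\langle\cdot,\cdot\rangle_0$-orthogonal complement of $\mathfrak k$ in $\mathfrak g$, and $X=X_{\mathfrak k}+X_{\mathfrak p}$. Fix $t>0$ and set $\phi(Y)=\frac{t}{t+1}Y_{\mathfrak k}+Y_{\mathfrak p}$. *)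

theory Defs
  imports "HOL-Analysis.Analysis"
begin

text \<open>Imaginary octonions Im O = real^7, basis e_0..e_6 indexed by the ring Z/7 (type 7).
  Multiplication table (Cayley/Fano convention): e_a e_(a+1) = e_(a+3) for all a mod 7,
  i.e. the associative triples are the cyclic triples (a, a+1, a+3).
  oct_c i j k is the totally antisymmetric structure constant.\<close>

definition oct_c :: "7 \<Rightarrow> 7 \<Rightarrow> 7 \<Rightarrow> real" where
  "oct_c i j k =
     (if (j = i + 1 \<and> k = i + 3) \<or> (j = i + 2 \<and> k = i + 6) \<or> (j = i + 4 \<and> k = i + 5) then 1
      else if (j = i + 3 \<and> k = i + 1) \<or> (j = i + 6 \<and> k = i + 2) \<or> (j = i + 5 \<and> k = i + 4) then -1
      else 0)"

text \<open>Imaginary part of the product of two imaginary octonions (7-dimensional cross product).\<close>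
definition cross7 :: "real^7 \<Rightarrow> real^7 \<Rightarrow> real^7" where
  "cross7 u v = (\<chi> k. \<Sum>i\<in>UNIV. \<Sum>j\<in>UNIV. oct_c i j k * u $ i * v $ j)"

type_synonym octonion = "real \<times> (real^7)"

definition oct_mult :: "octonion \<Rightarrow> octonion \<Rightarrow> octonion" where
  "oct_mult x y = (fst x * fst y - inner (snd x) (snd y),
                   fst x *\<^sub>R snd y + fst y *\<^sub>R snd x + cross7 (snd x) (snd y))"

definition oct_add :: "octonion \<Rightarrow> octonion \<Rightarrow> octonion" where
  "oct_add x y = (fst x + fst y, snd x + snd y)"

definition ext_op :: "real^7^7 \<Rightarrow> octonion \<Rightarrow> octonion" where
  "ext_op X x = (0, X *v snd x)"

text \<open>The Lie algebra g = Lie(G_2) = Der(O), realised as matrices acting on Im O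
  (every derivation of O kills 1 and preserves Im O).\<close>
definition g2 :: "(real^7^7) set" where
  "g2 = {X. \<forall>x y. ext_op X (oct_mult x y) =
                   oct_add (oct_mult (ext_op X x) y) (oct_mult x (ext_op X y))}"

text \<open>Lie algebra of K = stabiliser of the unit imaginary octonion i.\<close>
definition k_alg :: "real^7 \<Rightarrow> (real^7^7) set" where
  "k_alg i = {X \<in> g2. X *v i = 0}"

definition ip0 :: "real^7^7 \<Rightarrow> real^7^7 \<Rightarrow> real" where
  "ip0 X Y = - trace (X ** Y)"

definition p_alg :: "real^7 \<Rightarrow> (real^7^7) set" where
  "p_alg i = {X \<in> g2. \<forall>Z \<in> k_alg i. ip0 X Z = 0}"

definition lie_br :: "real^7^7 \<Rightarrow> real^7^7 \<Rightarrow> real^7^7" where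
  "lie_br X Y = X ** Y - Y ** X"

definition proj_k :: "real^7 \<Rightarrow> real^7^7 \<Rightarrow> real^7^7" where
  "proj_k i X = (THE Z. Z \<in> k_alg i \<and> X - Z \<in> p_alg i)"

definition proj_p :: "real^7 \<Rightarrow> real^7^7 \<Rightarrow> real^7^7" where
  "proj_p i X = X - proj_k i X"

definition phi :: "real \<Rightarrow> real^7 \<Rightarrow> real^7^7 \<Rightarrow> real^7^7" where
  "phi t i Y = (t / (t + 1)) *\<^sub>R proj_k i Y + proj_p i Y"

end

theory Submission
  imports Defs
begin

text \<open>Write X = X_k + X_p and s = t/(t+1). Then [\<phi> X, \<phi> Y] =
  s^2 [X_k,Y_k] + s ([X_k,Y_p] + [X_p,Y_k]) + [X_p,Y_p], and [X,Y] is the same expression with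
  s = 1; the first summand lies in k and the middle one in p. Both conditions therefore amount to
  the vanishing of all three summands, once we know that for u, v \<in> p the bracket [u,v] can only
  lie in p if it is zero. For that, u \<mapsto> u i identifies p with the tangent space of S^6 at i.
  If [u,v] \<bottom> k then, by invariance of the trace form, \<langle>Z a, b\<rangle> = 0 for all Z \<in> k, where
  a = u i and b = v i; testing this against the elements der_matrix x (cross7 i x) of k forces b to be a real
  multiple of a, so v is a multiple of u.\<close>

lemma UNIV_7: "(UNIV::7 set) = {0,1,2,3,4,5,6}"
proof -
  have "x \<in> {0,1,2,3,4,5,6}" for x :: 7
  proof (cases x rule: bit1_cases)
    case (of_int z)
    then have "0 \<le> z" "z < 7" by simp_all
    then have "z = 0 \<or> z = 1 \<or> z = 2 \<or> z = 3 \<or> z = 4 \<or> z = 5 \<or> z = 6" by presburger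
    then show ?thesis using of_int by auto
  qed
  then show ?thesis by auto
qed

lemma sum_7: "(\<Sum>i\<in>UNIV. f i) = f 0 + f 1 + f 2 + f 3 + f 4 + f 5 + f (6::7)"
proof -
  have d: "(0::7) \<notin> {1,2,3,4,5,6}" "(1::7) \<notin> {2,3,4,5,6}" "(2::7) \<notin> {3,4,5,6}"
     "(3::7) \<notin> {4,5,6}" "(4::7) \<notin> {5,6}" "(5::7) \<notin> {6}" by simp_all
  show ?thesis
    unfolding UNIV_7
    by (simp only: d not_False_eq_True sum.insert finite_insert finite.emptyI sum.empty empty_iff
        add_0_right add.assoc)
qed

lemma vec_eq_7:
  "(u::real^7) = v \<longleftrightarrow> u$0 = v$0 \<and> u$1 = v$1 \<and> u$2 = v$2 \<and> u$3 = v$3 \<and> u$4 = v$4 \<and> u$5 = v$5 \<and> u$6 = v$6"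
proof -
  have "(\<forall>k::7. P k) \<longleftrightarrow> (\<forall>k\<in>{0,1,2,3,4,5,6}. P k)" for P
    unfolding UNIV_7[symmetric] by simp
  then show ?thesis by (simp add: vec_eq_iff)
qed

lemma cross7_nth:
  "cross7 u v $ 0 = u$1 * v$3 - u$3 * v$1 + u$2 * v$6 - u$6 * v$2 + u$4 * v$5 - u$5 * v$4"
  "cross7 u v $ 1 = u$2 * v$4 - u$4 * v$2 + u$3 * v$0 - u$0 * v$3 + u$5 * v$6 - u$6 * v$5"
  "cross7 u v $ 2 = u$3 * v$5 - u$5 * v$3 + u$4 * v$1 - u$1 * v$4 + u$6 * v$0 - u$0 * v$6"
  "cross7 u v $ 3 = u$4 * v$6 - u$6 * v$4 + u$5 * v$2 - u$2 * v$5 + u$0 * v$1 - u$1 * v$0"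
  "cross7 u v $ 4 = u$5 * v$0 - u$0 * v$5 + u$6 * v$3 - u$3 * v$6 + u$1 * v$2 - u$2 * v$1"
  "cross7 u v $ 5 = u$6 * v$1 - u$1 * v$6 + u$0 * v$4 - u$4 * v$0 + u$2 * v$3 - u$3 * v$2"
  "cross7 u v $ 6 = u$0 * v$2 - u$2 * v$0 + u$1 * v$5 - u$5 * v$1 + u$3 * v$4 - u$4 * v$3"
  by (simp_all add: cross7_def sum_7 oct_c_def)

lemma inner_7: "inner (u::real^7) v = u$0 * v$0 + u$1 * v$1 + u$2 * v$2 + u$3 * v$3 + u$4 * v$4 + u$5 * v$5 + u$6 * v$6"
  by (simp add: inner_vec_def sum_7)

lemma matrix_vector_mult_7:
  "((X::real^7^7) *v v) $ k = X$k$0 * v$0 + X$k$1 * v$1 + X$k$2 * v$2 + X$k$3 * v$3 + X$k$4 * v$4 + X$k$5 * v$5 + X$k$6 * v$6"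
  by (simp add: matrix_vector_mult_def sum_7)

lemma matrix_matrix_mult_7:
  "((X::real^7^7) ** Y) $ r $ s = X$r$0 * Y$0$s + X$r$1 * Y$1$s + X$r$2 * Y$2$s + X$r$3 * Y$3$s + X$r$4 * Y$4$s + X$r$5 * Y$5$s + X$r$6 * Y$6$s"
  by (simp add: matrix_matrix_mult_def sum_7)

lemma trace_7: "trace (X::real^7^7) = X$0$0 + X$1$1 + X$2$2 + X$3$3 + X$4$4 + X$5$5 + X$6$6"
  by (simp add: trace_def sum_7)

lemmas coords_7 = cross7_nth inner_7 vector_add_component vector_scaleR_component vector_minus_component
  real_scaleR_def vector_uminus_component zero_index

lemma cross7_cross7: "cross7 x (cross7 x y) = inner x y *\<^sub>R x - inner x x *\<^sub>R y"
  by (simp only: vec_eq_7 coords_7) algebra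

lemma inner_cross7_cross7:
  "inner (cross7 x y) (cross7 x z) = inner x x * inner y z - inner x y * inner x z"
  by (simp only: coords_7) algebra

lemma inner_cross7_left [simp]: "inner (cross7 x y) x = 0"
  by (simp only: coords_7) algebra

interpretation cross7: bounded_bilinear cross7
proof
  show "cross7 (a + a') b = cross7 a b + cross7 a' b"
    and "cross7 a (b + b') = cross7 a b + cross7 a b'"
    and "cross7 (r *\<^sub>R a) b = r *\<^sub>R cross7 a b"
    and "cross7 a (r *\<^sub>R b) = r *\<^sub>R cross7 a b" for a a' b b' :: "real^7" and r
    by (simp_all only: vec_eq_7 coords_7) algebra+
  have "norm (cross7 a b) \<le> norm a * norm b" for a b :: "real^7"
  proof (rule power2_le_imp_le)
    have "(norm (cross7 a b))\<^sup>2 = inner a a * inner b b - inner a b * inner a b"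
      by (simp only: power2_norm_eq_inner inner_cross7_cross7)
    also have "\<dots> \<le> inner a a * inner b b" by simp
    also have "\<dots> = (norm a * norm b)\<^sup>2" by (simp add: power_mult_distrib power2_norm_eq_inner)
    finally show "(norm (cross7 a b))\<^sup>2 \<le> (norm a * norm b)\<^sup>2" .
  qed simp
  then show "\<exists>K. \<forall>a b. norm (cross7 a b) \<le> norm a * norm b * K"
    by (metis mult.right_neutral)
qed

section \<open>The Lie algebra g2\<close>

definition skew_op :: "real^7^7 \<Rightarrow> bool" where
  "skew_op X \<longleftrightarrow> (\<forall>u v. inner (X *v u) v = - inner u (X *v v))"

definition cross7_derivation :: "real^7^7 \<Rightarrow> bool" where
  "cross7_derivation X \<longleftrightarrow> (\<forall>u v. X *v cross7 u v = cross7 (X *v u) v + cross7 u (X *v v))"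

lemma g2_iff: "X \<in> g2 \<longleftrightarrow> skew_op X \<and> cross7_derivation X"
proof
  assume "X \<in> g2"
  then have "ext_op X (oct_mult (0, u) (0, v)) =
      oct_add (oct_mult (ext_op X (0, u)) (0, v)) (oct_mult (0, u) (ext_op X (0, v)))" for u v
    unfolding g2_def by blast
  then show "skew_op X \<and> cross7_derivation X"
    by (simp add: skew_op_def cross7_derivation_def ext_op_def oct_mult_def oct_add_def
        algebra_simps eq_neg_iff_add_eq_0)
next
  assume "skew_op X \<and> cross7_derivation X"
  then have skew: "inner (X *v u) v + inner u (X *v v) = 0"
    and der: "X *v cross7 u v = cross7 (X *v u) v + cross7 u (X *v v)" for u v
    by (auto simp: skew_op_def cross7_derivation_def)
  show "X \<in> g2"
    unfolding g2_def
  proof (intro CollectI allI)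
    fix x y :: octonion
    obtain a u b v where "x = (a, u)" "y = (b, v)" by (cases x, cases y)
    then show "ext_op X (oct_mult x y) = oct_add (oct_mult (ext_op X x) y) (oct_mult x (ext_op X y))"
      using skew[of u v] der[of u v]
      by (simp add: ext_op_def oct_mult_def oct_add_def algebra_simps matrix_vector_mult_scaleR)
  qed
qed

lemma g2_skew: "X \<in> g2 \<Longrightarrow> inner (X *v u) v = - inner u (X *v v)"
  by (simp add: g2_iff skew_op_def)

lemma g2_skew_self: "X \<in> g2 \<Longrightarrow> inner (X *v u) u = 0"
  using g2_skew[of X u u] by (simp add: inner_commute)

lemma g2_derivation: "X \<in> g2 \<Longrightarrow> X *v cross7 u v = cross7 (X *v u) v + cross7 u (X *v v)"
  by (simp add: g2_iff cross7_derivation_def)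

lemma g2_skew_nth: "X \<in> g2 \<Longrightarrow> X$a$b = - X$b$a"
  using g2_skew[of X "axis b 1" "axis a 1"]
  by (simp add: matrix_vector_mult_basis column_def inner_axis inner_axis')

lemma g2_derivation_axis_nth:
  "X \<in> g2 \<Longrightarrow> (X *v cross7 (axis a 1) (axis b 1)) $ k =
     cross7 (X *v axis a 1) (axis b 1) $ k + cross7 (axis a 1) (X *v axis b 1) $ k"
  by (simp add: g2_derivation)

text \<open>g2 is 14-dimensional: these relations express every entry through the free entries
  X$r$s with r \<in> {4,5,6}, s < r and (r,s) \<noteq> (4,1).\<close>

lemma g2_entries:
  assumes "X \<in> g2"
  shows "X$0$0 = 0" "X$1$1 = 0" "X$2$2 = 0" "X$3$3 = 0" "X$4$4 = 0" "X$5$5 = 0" "X$6$6 = 0"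
    and "X$0$1 = -X$5$2 + X$6$4" "X$0$2 = X$4$3 + X$5$1" "X$0$3 = -X$4$2 - X$6$5"
    and "X$0$4 = -X$4$0" "X$0$5 = -X$5$0" "X$0$6 = -X$6$0"
    and "X$1$2 = -X$5$0 - X$6$3" "X$1$3 = X$5$4 + X$6$2" "X$1$4 = -X$5$3 + X$6$0"
    and "X$1$5 = -X$5$1" "X$1$6 = -X$6$1"
    and "X$2$3 = X$4$0 - X$6$1" "X$2$4 = -X$4$2" "X$2$5 = -X$5$2" "X$2$6 = -X$6$2"
    and "X$3$4 = -X$4$3" "X$3$5 = -X$5$3" "X$3$6 = -X$6$3"
    and "X$4$5 = -X$5$4" "X$4$6 = -X$6$4" "X$5$6 = -X$6$5"
    and "X$1$0 = X$5$2 - X$6$4" "X$2$0 = -X$4$3 - X$5$1" "X$2$1 = X$5$0 + X$6$3"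
    and "X$3$0 = X$4$2 + X$6$5" "X$3$1 = -X$5$4 - X$6$2" "X$3$2 = -X$4$0 + X$6$1"
    and "X$4$1 = X$5$3 - X$6$0"
proof -
  note S = g2_skew_nth[OF assms] and D = g2_derivation_axis_nth[OF assms]
  note entry_simps = matrix_vector_mult_7 cross7_nth axis_def
  show "X$0$0 = 0" using S[of 0 0] by (simp add: entry_simps; linarith)
  show "X$1$1 = 0" using S[of 1 1] by (simp add: entry_simps; linarith)
  show "X$2$2 = 0" using S[of 2 2] by (simp add: entry_simps; linarith)
  show "X$3$3 = 0" using S[of 0 0] D[of 0 1 3] S[of 1 1] by (simp add: entry_simps; linarith)
  show "X$4$4 = 0" using S[of 1 1] D[of 1 2 4] S[of 2 2] by (simp add: entry_simps; linarith)
  show "X$5$5 = 0" using S[of 0 0] D[of 0 4 5] S[of 1 1] D[of 1 2 4] S[of 2 2] by (simp add: entry_simps; linarith)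
  show "X$6$6 = 0" using S[of 0 0] D[of 0 2 6] S[of 2 2] by (simp add: entry_simps; linarith)
  show "X$0$1 = -X$5$2 + X$6$4" using D[of 1 2 6] by (simp add: entry_simps; linarith)
  show "X$0$2 = X$4$3 + X$5$1" using S[of 2 0] D[of 0 3 5] by (simp add: entry_simps; linarith)
  show "X$0$3 = -X$4$2 - X$6$5" using D[of 0 1 0] D[of 0 4 6] D[of 1 2 2] by (simp add: entry_simps; linarith)
  show "X$0$4 = -X$4$0" using S[of 4 0] by (simp add: entry_simps; linarith)
  show "X$0$5 = -X$5$0" using D[of 0 4 0] by (simp add: entry_simps; linarith)
  show "X$0$6 = -X$6$0" using D[of 0 2 0] by (simp add: entry_simps; linarith)
  show "X$1$2 = -X$5$0 - X$6$3" using D[of 0 1 6] S[of 2 1] by (simp add: entry_simps; linarith)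
  show "X$1$3 = X$5$4 + X$6$2" using D[of 0 1 1] D[of 1 2 5] by (simp add: entry_simps; linarith)
  show "X$1$4 = -X$5$3 + X$6$0" using D[of 0 3 4] D[of 1 2 1] by (simp add: entry_simps; linarith)
  show "X$1$5 = -X$5$1" using S[of 2 0] D[of 0 4 1] D[of 1 2 3] by (simp add: entry_simps; linarith)
  show "X$1$6 = -X$6$1" using D[of 0 2 1] S[of 4 0] D[of 1 2 0] by (simp add: entry_simps; linarith)
  show "X$2$3 = X$4$0 - X$6$1" using D[of 0 3 6] by (simp add: entry_simps; linarith)
  show "X$2$4 = -X$4$2" using D[of 1 2 2] by (simp add: entry_simps; linarith)
  show "X$2$5 = -X$5$2" using S[of 1 0] D[of 0 4 2] D[of 1 2 6] by (simp add: entry_simps; linarith)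
  show "X$2$6 = -X$6$2" using D[of 0 2 2] by (simp add: entry_simps; linarith)
  show "X$3$4 = -X$4$3" using S[of 2 0] D[of 0 3 5] D[of 1 2 3] by (simp add: entry_simps; linarith)
  show "X$3$5 = -X$5$3" using D[of 0 3 4] D[of 0 4 3] D[of 1 2 1] by (simp add: entry_simps; linarith)
  show "X$3$6 = -X$6$3" using D[of 0 1 6] D[of 0 2 3] S[of 2 1] by (simp add: entry_simps; linarith)
  show "X$4$5 = -X$5$4" using D[of 0 4 4] by (simp add: entry_simps; linarith)
  show "X$4$6 = -X$6$4" using S[of 1 0] D[of 0 6 5] D[of 1 2 6] by (simp add: entry_simps; linarith)
  show "X$5$6 = -X$6$5" using D[of 0 2 5] D[of 0 4 6] D[of 1 2 2] by (simp add: entry_simps; linarith)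
  show "X$1$0 = X$5$2 - X$6$4" using S[of 1 0] D[of 1 2 6] by (simp add: entry_simps; linarith)
  show "X$2$0 = -X$4$3 - X$5$1" using D[of 0 3 5] by (simp add: entry_simps; linarith)
  show "X$2$1 = X$5$0 + X$6$3" using D[of 0 1 6] by (simp add: entry_simps; linarith)
  show "X$3$0 = X$4$2 + X$6$5" using D[of 0 4 6] D[of 1 2 2] by (simp add: entry_simps; linarith)
  show "X$3$1 = -X$5$4 - X$6$2" using D[of 1 2 5] by (simp add: entry_simps; linarith)
  show "X$3$2 = -X$4$0 + X$6$1" using S[of 4 0] D[of 1 2 0] by (simp add: entry_simps; linarith)
  show "X$4$1 = X$5$3 - X$6$0" using D[of 0 3 4] by (simp add: entry_simps; linarith)
qed

definition der_map :: "real^7 \<Rightarrow> real^7 \<Rightarrow> real^7 \<Rightarrow> real^7" where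
  "der_map x y z = cross7 (cross7 x y) z + (3 * inner x y) *\<^sub>R z - (3 * inner y z) *\<^sub>R x
     + 3 *\<^sub>R cross7 x (cross7 y z)"

lemma linear_der_map: "linear (der_map x y)"
proof
  show "der_map x y (z + z') = der_map x y z + der_map x y z'"
    and "der_map x y (r *\<^sub>R z) = r *\<^sub>R der_map x y z" for z z' r
    unfolding der_map_def by (simp_all only: vec_eq_7 coords_7) algebra+
qed

definition der_matrix :: "real^7 \<Rightarrow> real^7 \<Rightarrow> real^7^7" where
  "der_matrix x y = matrix (der_map x y)"

lemma der_matrix_mult [simp]: "der_matrix x y *v z = der_map x y z"
  by (simp add: der_matrix_def matrix_works linear_der_map linear_matrix_vector_mul_eq)

lemma der_matrix_nth: "der_matrix x y $ r $ s = der_map x y (axis s 1) $ r"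
  by (simp add: der_matrix_def matrix_def)

lemma der_matrix_in_g2: "der_matrix x y \<in> g2"
  unfolding g2_iff skew_op_def cross7_derivation_def der_matrix_mult
proof (intro conjI allI)
  show "inner (der_map x y u) v = - inner u (der_map x y v)" for u v
    unfolding der_map_def by (simp only: coords_7) algebra
  show "der_map x y (cross7 u v) = cross7 (der_map x y u) v + cross7 u (der_map x y v)" for u v
    unfolding der_map_def by (simp only: vec_eq_7 coords_7) algebra
qed

lemma der_map_self: "der_map x y x = 4 *\<^sub>R (inner x x *\<^sub>R y - inner x y *\<^sub>R x)"
  unfolding der_map_def by (simp only: vec_eq_7 coords_7) algebra

lemma der_map_cross7_kills: "der_map x (cross7 i x) i = (-4 * inner x i) *\<^sub>R cross7 x i"
  unfolding der_map_def by (simp only: vec_eq_7 coords_7) algebra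

lemma der_map_scaleR_right: "der_map x (c *\<^sub>R y) z = c *\<^sub>R der_map x y z"
  unfolding der_map_def by (simp only: vec_eq_7 coords_7) algebra

lemma ip0_der_matrix:
  assumes "Z \<in> g2"
  shows "ip0 (der_matrix x y) Z = 12 * inner (Z *v x) y"
  unfolding ip0_def trace_7 matrix_matrix_mult_7 der_matrix_nth
  by (simp only: g2_entries[OF assms])
     (simp add: der_map_def coords_7 axis_def matrix_vector_mult_7 g2_entries[OF assms], algebra)

lemma subspace_g2: "subspace g2"
proof (rule subspaceI)
  show "0 \<in> g2"
    by (simp add: g2_iff skew_op_def cross7_derivation_def cross7.zero_left cross7.zero_right)
  show "X + Y \<in> g2" if "X \<in> g2" "Y \<in> g2" for X Y
    using that by (simp add: g2_iff skew_op_def cross7_derivation_def matrix_vector_mult_add_rdistrib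
        inner_add_left inner_add_right cross7.add_left cross7.add_right)
  show "c *\<^sub>R X \<in> g2" if "X \<in> g2" for c X
    using that by (simp add: g2_iff skew_op_def cross7_derivation_def scaleR_matrix_vector_assoc[symmetric]
        cross7.scaleR_left cross7.scaleR_right scaleR_add_right)
qed

lemma matrix_vector_mult_lie_br: "lie_br X Y *v u = X *v (Y *v u) - Y *v (X *v u)"
  by (simp add: lie_br_def matrix_vector_mult_diff_rdistrib matrix_vector_mul_assoc)

lemma g2_lie_br: assumes "X \<in> g2" "Y \<in> g2" shows "lie_br X Y \<in> g2"
  unfolding g2_iff skew_op_def cross7_derivation_def matrix_vector_mult_lie_br
proof (intro conjI allI)
  fix u v
  show "inner (X *v (Y *v u) - Y *v (X *v u)) v = - inner u (X *v (Y *v v) - Y *v (X *v v))"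
    using g2_skew[OF assms(1)] g2_skew[OF assms(2)] by (simp add: inner_diff_left inner_diff_right)
  show "X *v (Y *v cross7 u v) - Y *v (X *v cross7 u v) =
        cross7 (X *v (Y *v u) - Y *v (X *v u)) v + cross7 u (X *v (Y *v v) - Y *v (X *v v))"
    using g2_derivation[OF assms(1)] g2_derivation[OF assms(2)]
    by (simp add: matrix_vector_right_distrib cross7.diff_left cross7.diff_right algebra_simps)
qed

lemma lie_br_scaleR_self: "lie_br X (c *\<^sub>R X) = 0"
  by (simp add: lie_br_def vec_eq_iff matrix_matrix_mult_def sum_distrib_left algebra_simps)

lemma lie_br_expand:
  "lie_br (s *\<^sub>R P + Q) (s *\<^sub>R R + S) =
     (s * s) *\<^sub>R lie_br P R + s *\<^sub>R (lie_br P S + lie_br Q R) + lie_br Q S"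
  unfolding lie_br_def vec_eq_iff by (intro allI) (simp only: coords_7 matrix_matrix_mult_7, algebra)

lemma ip0_sym: "ip0 X Y = ip0 Y X"
  unfolding ip0_def by (metis trace_mul_sym)

lemma ip0_add_left: "ip0 (X + Y) Z = ip0 X Z + ip0 Y Z"
  by (simp add: ip0_def trace_def matrix_matrix_mult_def sum.distrib algebra_simps)

lemma ip0_scaleR_left: "ip0 (c *\<^sub>R X) Z = c * ip0 X Z"
  by (simp add: ip0_def trace_def matrix_matrix_mult_def sum_distrib_left algebra_simps)

lemma matrix_diff_rdistrib: "((A::'a::ring_1^'n^'m) - B) ** C = A ** C - B ** C"
  by (simp add: matrix_matrix_mult_def vec_eq_iff sum_subtractf algebra_simps)

lemma matrix_diff_ldistrib: "(A::'a::ring_1^'n^'m) ** (B - C) = A ** B - A ** C"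
  by (simp add: matrix_matrix_mult_def vec_eq_iff sum_subtractf algebra_simps)

lemma ip0_lie_br_invariant: "ip0 (lie_br U V) Z = ip0 V (lie_br Z U)"
proof -
  have "trace (U ** V ** Z) = trace (V ** (Z ** U))"
    by (metis matrix_mul_assoc trace_mul_sym)
  then show ?thesis
    by (simp add: ip0_def lie_br_def matrix_diff_ldistrib matrix_diff_rdistrib trace_sub matrix_mul_assoc)
qed

section \<open>The decomposition g2 = k \<oplus> p\<close>

lemma ip0_self_g2:
  assumes "X \<in> g2" shows "ip0 X X = (\<Sum>r\<in>UNIV. \<Sum>s\<in>UNIV. (X$r$s)\<^sup>2)"
proof -
  have "X$r$s * X$s$r = - (X$r$s)\<^sup>2" for r s
    using g2_skew_nth[OF assms, of s r] by (simp add: power2_eq_square)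
  then show ?thesis
    by (simp add: ip0_def trace_def matrix_matrix_mult_def sum_negf)
qed

lemma ip0_self_eq_0_g2: assumes "X \<in> g2" "ip0 X X = 0" shows "X = 0"
proof -
  have "(\<Sum>r\<in>UNIV. \<Sum>s\<in>UNIV. (X$r$s)\<^sup>2) = 0" using assms ip0_self_g2 by simp
  then have "(\<Sum>s\<in>UNIV. (X$r$s)\<^sup>2) = 0" for r
    by (subst (asm) sum_nonneg_eq_0_iff) (auto intro: sum_nonneg)
  then show ?thesis by (simp add: sum_nonneg_eq_0_iff vec_eq_iff)
qed

lemma inner_mult_self_le_ip0:
  assumes "X \<in> g2" shows "inner (X *v w) (X *v w) \<le> ip0 X X * inner w w"
proof -
  have "inner (X *v w) (X *v w) = (\<Sum>r\<in>UNIV. (inner (X $ r) w)\<^sup>2)"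
    by (simp add: inner_vec_def matrix_vector_mult_def power2_eq_square)
  also have "\<dots> \<le> (\<Sum>r\<in>UNIV. inner (X $ r) (X $ r) * inner w w)"
    by (rule sum_mono) (rule Cauchy_Schwarz_ineq)
  also have "\<dots> = ip0 X X * inner w w"
    by (simp add: ip0_self_g2[OF assms] inner_vec_def power2_eq_square sum_distrib_right)
  finally show ?thesis .
qed

lemma subspace_k_alg: "subspace (k_alg i)"
proof (rule subspaceI)
  show "0 \<in> k_alg i" using subspace_0[OF subspace_g2] by (simp add: k_alg_def)
  show "X + Y \<in> k_alg i" if "X \<in> k_alg i" "Y \<in> k_alg i" for X Y
    using that subspace_add[OF subspace_g2] by (simp add: k_alg_def matrix_vector_mult_add_rdistrib)
  show "c *\<^sub>R X \<in> k_alg i" if "X \<in> k_alg i" for c X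
    using that subspace_scale[OF subspace_g2]
    by (simp add: k_alg_def scaleR_matrix_vector_assoc[symmetric])
qed

lemma k_alg_lie_br: "X \<in> k_alg i \<Longrightarrow> Y \<in> k_alg i \<Longrightarrow> lie_br X Y \<in> k_alg i"
  by (simp add: k_alg_def g2_lie_br matrix_vector_mult_lie_br)

lemma subspace_p_alg: "subspace (p_alg i)"
proof (rule subspaceI)
  show "0 \<in> p_alg i" using subspace_0[OF subspace_g2] by (simp add: p_alg_def ip0_def trace_def)
  show "X + Y \<in> p_alg i" if "X \<in> p_alg i" "Y \<in> p_alg i" for X Y
    using that subspace_add[OF subspace_g2] by (simp add: p_alg_def ip0_add_left)
  show "c *\<^sub>R X \<in> p_alg i" if "X \<in> p_alg i" for c X
    using that subspace_scale[OF subspace_g2] by (simp add: p_alg_def ip0_scaleR_left)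
qed

lemma k_alg_p_alg_eq_0: assumes "X \<in> k_alg i" "X \<in> p_alg i" shows "X = 0"
proof -
  have "ip0 X X = 0" using assms by (simp add: p_alg_def)
  then show ?thesis using assms(2) ip0_self_eq_0_g2 by (simp add: p_alg_def)
qed

lemma lie_br_k_alg_p_alg: assumes "Z \<in> k_alg i" "u \<in> p_alg i" shows "lie_br Z u \<in> p_alg i"
proof -
  have "ip0 (lie_br Z u) W = 0" if "W \<in> k_alg i" for W
    using assms(2) k_alg_lie_br[OF that assms(1)]
    by (simp add: ip0_lie_br_invariant p_alg_def)
  moreover have "lie_br Z u \<in> g2" using assms by (simp add: k_alg_def p_alg_def g2_lie_br)
  ultimately show ?thesis by (simp add: p_alg_def)
qed

definition lift_p :: "real^7 \<Rightarrow> real^7 \<Rightarrow> real^7^7" where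
  "lift_p i a = (1/4) *\<^sub>R der_matrix i a"

lemma lift_p_apply: assumes "inner i i = 1" "inner i a = 0" shows "lift_p i a *v i = a"
  using assms by (simp add: lift_p_def scaleR_matrix_vector_assoc[symmetric] der_map_self)

lemma lift_p_scaleR: "lift_p i (c *\<^sub>R a) = c *\<^sub>R lift_p i a"
  by (simp add: lift_p_def der_matrix_def der_map_scaleR_right matrix_eq
      scaleR_matrix_vector_assoc[symmetric] linear_der_map matrix_works)

lemma ip0_lift_p: "Z \<in> g2 \<Longrightarrow> ip0 (lift_p i a) Z = 3 * inner (Z *v i) a"
  by (simp add: lift_p_def ip0_scaleR_left ip0_der_matrix)

lemma lift_p_in_p_alg: "lift_p i a \<in> p_alg i"
proof -
  have "lift_p i a \<in> g2"
    unfolding lift_p_def by (rule subspace_scale[OF subspace_g2 der_matrix_in_g2])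
  then show ?thesis by (simp add: p_alg_def k_alg_def ip0_lift_p)
qed

lemma g2_diff_lift_p_in_k_alg:
  assumes "inner i i = 1" "X \<in> g2" shows "X - lift_p i (X *v i) \<in> k_alg i"
proof -
  have "inner i (X *v i) = 0" using g2_skew_self[OF assms(2)] by (simp add: inner_commute)
  then have "lift_p i (X *v i) *v i = X *v i" by (rule lift_p_apply[OF assms(1)])
  moreover have "lift_p i (X *v i) \<in> g2" using lift_p_in_p_alg by (simp add: p_alg_def)
  ultimately show ?thesis
    using assms(2) subspace_g2 by (simp add: k_alg_def matrix_vector_mult_diff_rdistrib subspace_diff)
qed

lemma p_alg_eq_lift_p: assumes "inner i i = 1" "u \<in> p_alg i" shows "u = lift_p i (u *v i)"
proof -
  have "u - lift_p i (u *v i) \<in> k_alg i"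
    using assms by (simp add: p_alg_def g2_diff_lift_p_in_k_alg)
  moreover have "u - lift_p i (u *v i) \<in> p_alg i"
    using assms(2) lift_p_in_p_alg subspace_p_alg by (rule subspace_diff[rotated])
  ultimately show ?thesis using k_alg_p_alg_eq_0 by fastforce
qed

lemma proj_k_eq: assumes "inner i i = 1" "X \<in> g2" shows "proj_k i X = X - lift_p i (X *v i)"
  unfolding proj_k_def
proof (rule the_equality)
  show "X - lift_p i (X *v i) \<in> k_alg i \<and> X - (X - lift_p i (X *v i)) \<in> p_alg i"
    using g2_diff_lift_p_in_k_alg[OF assms] lift_p_in_p_alg by simp
  fix Z assume Z: "Z \<in> k_alg i \<and> X - Z \<in> p_alg i"
  have "Z - (X - lift_p i (X *v i)) \<in> k_alg i"
    using Z g2_diff_lift_p_in_k_alg[OF assms] subspace_k_alg by (blast intro: subspace_diff)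
  moreover have "Z - (X - lift_p i (X *v i)) = lift_p i (X *v i) - (X - Z)" by simp
  then have "Z - (X - lift_p i (X *v i)) \<in> p_alg i"
    using Z lift_p_in_p_alg subspace_p_alg by (metis subspace_diff)
  ultimately show "Z = X - lift_p i (X *v i)" using k_alg_p_alg_eq_0 by fastforce
qed

lemma proj_k_in_k_alg: "inner i i = 1 \<Longrightarrow> X \<in> g2 \<Longrightarrow> proj_k i X \<in> k_alg i"
  by (simp add: proj_k_eq g2_diff_lift_p_in_k_alg)

lemma proj_p_in_p_alg: "inner i i = 1 \<Longrightarrow> X \<in> g2 \<Longrightarrow> proj_p i X \<in> p_alg i"
  by (simp add: proj_p_def proj_k_eq lift_p_in_p_alg)

section \<open>Brackets of elements of p\<close>

lemma der_map_cross7_form_eq_0: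
  assumes "\<forall>Z\<in>k_alg i. inner (Z *v a) b = 0" and "inner x i = 0"
  shows "inner (der_map a b x) (cross7 i x) = 0"
proof -
  define Z where "Z = der_matrix x (cross7 i x)"
  have "Z \<in> k_alg i"
    using assms(2) der_matrix_in_g2 by (simp add: Z_def k_alg_def der_map_cross7_kills)
  moreover have "Z \<in> g2" by (simp add: Z_def der_matrix_in_g2)
  ultimately have "ip0 (der_matrix a b) Z = 0"
    using assms(1) by (simp add: ip0_der_matrix)
  then show ?thesis
    using der_matrix_in_g2 by (simp add: ip0_sym[of "der_matrix a b"] ip0_der_matrix Z_def)
qed

lemma inner_cross7_der_map:
  assumes "inner i i = 1" "inner i a = 0" "inner i b = 0" "inner a b = 0"
    and vanish: "\<And>x. inner x i = 0 \<Longrightarrow> inner (der_map a b x) (cross7 i x) = 0"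
  shows "inner (cross7 (der_map a b i) b) (cross7 i a) = 8 * (inner a a * inner b b)"
proof -
  define c where "c = cross7 i b"
  let ?Q = "\<lambda>x. inner (der_map a b x) (cross7 i x)"
  have "inner a i = 0" using assms(2) by (simp add: inner_commute)
  moreover have "inner c i = 0" by (simp add: c_def)
  ultimately have "inner (a + c) i = 0" "inner (a - c) i = 0"
    by (simp_all add: inner_add_left inner_diff_left)
  then have "?Q (a + c) - ?Q (a - c) = 0" using vanish by simp
  moreover have "?Q (a + c) - ?Q (a - c) =
      2 * (inner (der_map a b a) (cross7 i c) + inner (der_map a b c) (cross7 i a))"
    using linear_der_map[of a b]
    by (simp add: linear_add linear_diff cross7.add_right cross7.diff_right
        inner_add_left inner_add_right inner_diff_left inner_diff_right algebra_simps)
  moreover have "cross7 i c = - b"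
    using assms(1,3) by (simp add: c_def cross7_cross7)
  moreover have "inner (der_map a b a) b = 4 * (inner a a * inner b b)"
    using assms(4) by (simp add: der_map_self inner_diff_left inner_commute)
  moreover have "der_map a b c = cross7 (der_map a b i) b + cross7 i (der_map a b b)"
    using g2_derivation[OF der_matrix_in_g2, of a b i b] by (simp add: c_def)
  moreover have "inner (cross7 i (der_map a b b)) (cross7 i a) = - inner (der_map a b a) b"
    using g2_skew[OF der_matrix_in_g2, of a b b a] assms(1,2)
    by (simp add: inner_cross7_cross7 inner_commute)
  ultimately show ?thesis by (simp add: inner_add_left)
qed

lemma inner_der_map_le:
  assumes "inner i i = 1" "inner a b = 0"
  shows "inner (der_map a b i) (der_map a b i) \<le> 48 * (inner a a * inner b b)"
proof -
  have "inner (der_map a b i) (der_map a b i) \<le> ip0 (der_matrix a b) (der_matrix a b)"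
    using inner_mult_self_le_ip0[OF der_matrix_in_g2, of a b i] assms(1) by simp
  also have "\<dots> = 12 * inner (der_map a b a) b"
    using der_matrix_in_g2 by (simp add: ip0_der_matrix)
  also have "\<dots> = 48 * (inner a a * inner b b)"
    using assms(2) by (simp add: der_map_self inner_diff_left inner_commute)
  finally show ?thesis .
qed

text \<open>Cauchy--Schwarz combines inner_cross7_der_map and inner_der_map_le into
  64 G^2 \<le> 48 G^2 for G = |a|^2 |b|^2.\<close>

lemma k_alg_orthogonal_pair:
  assumes i: "inner i i = 1" and "inner i a = 0" "inner i b = 0" "inner a b = 0"
    and "\<forall>Z\<in>k_alg i. inner (Z *v a) b = 0"
  shows "inner a a * inner b b = 0"
proof -
  define G where "G = inner a a * inner b b"
  define w where "w = der_map a b i"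
  have "(8 * G)\<^sup>2 = (inner (cross7 w b) (cross7 i a))\<^sup>2"
    using inner_cross7_der_map[OF assms(1-4) der_map_cross7_form_eq_0[OF assms(5)]]
    by (simp add: G_def w_def)
  also have "\<dots> \<le> inner (cross7 w b) (cross7 w b) * inner (cross7 i a) (cross7 i a)"
    by (rule Cauchy_Schwarz_ineq)
  also have "\<dots> \<le> inner w w * inner b b * inner a a"
    using assms(2) i by (intro mult_mono) (simp_all add: inner_cross7_cross7 inner_commute)
  also have "\<dots> \<le> 48 * G * inner b b * inner a a"
    using inner_der_map_le[OF i assms(4)] by (simp add: G_def w_def mult_right_mono)
  also have "\<dots> = 48 * G * G" by (simp add: G_def)
  finally have "G * G \<le> 0" by (simp add: power2_eq_square)
  then have "G = 0" using not_square_less_zero[of G] by simp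
  then show ?thesis by (simp add: G_def)
qed

lemma k_alg_orthogonal_imp_parallel:
  assumes i: "inner i i = 1" and "inner i a = 0" "inner i b = 0"
    and k_orth: "\<forall>Z\<in>k_alg i. inner (Z *v a) b = 0"
  shows "a = 0 \<or> b = (inner a b / inner a a) *\<^sub>R a"
proof (cases "a = 0")
  case False
  define b' where "b' = b - (inner a b / inner a a) *\<^sub>R a"
  have "inner a b' = 0" using False by (simp add: b'_def inner_diff_right)
  moreover have "inner i b' = 0" using assms(2,3) by (simp add: b'_def inner_diff_right)
  moreover have "\<forall>Z\<in>k_alg i. inner (Z *v a) b' = 0"
    using k_orth g2_skew_self by (simp add: b'_def k_alg_def inner_diff_right)
  ultimately have "inner a a * inner b' b' = 0"
    using k_alg_orthogonal_pair[OF i assms(2)] by blast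
  then show ?thesis using False by (simp add: b'_def)
qed simp

lemma p_alg_lie_br_in_p_alg_eq_0:
  assumes i: "inner i i = 1" and u: "u \<in> p_alg i" and v: "v \<in> p_alg i"
    and uv: "lie_br u v \<in> p_alg i"
  shows "lie_br u v = 0"
proof -
  define a b where "a = u *v i" and "b = v *v i"
  have "\<forall>Z\<in>k_alg i. inner (Z *v a) b = 0"
  proof
    fix Z assume Z: "Z \<in> k_alg i"
    have "0 = ip0 (lie_br u v) Z" using uv Z by (simp add: p_alg_def)
    also have "\<dots> = ip0 v (lie_br Z u)" by (rule ip0_lie_br_invariant)
    also have "\<dots> = ip0 (lift_p i b) (lie_br Z u)" using p_alg_eq_lift_p[OF i v] by (simp add: b_def)
    also have "\<dots> = 3 * inner (Z *v a) b"
      using Z lie_br_k_alg_p_alg[OF Z u]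
      by (simp add: ip0_lift_p p_alg_def k_alg_def matrix_vector_mult_lie_br a_def)
    finally show "inner (Z *v a) b = 0" by simp
  qed
  moreover have "inner i a = 0" "inner i b = 0"
    using u v g2_skew_self by (simp_all add: a_def b_def p_alg_def inner_commute)
  ultimately consider "a = 0" | c where "b = c *\<^sub>R a"
    using k_alg_orthogonal_imp_parallel[OF i] by blast
  then show ?thesis
  proof cases
    case 1
    then show ?thesis
      using p_alg_eq_lift_p[OF i u] lift_p_scaleR[of i 0 0] by (simp add: a_def lie_br_def)
  next
    case 2
    then have "v = c *\<^sub>R u"
      using p_alg_eq_lift_p[OF i u] p_alg_eq_lift_p[OF i v] by (simp add: a_def b_def lift_p_scaleR)
    then show ?thesis by (simp add: lie_br_scaleR_self)
  qed
qed

lemma graded_sum_vanishing: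
  fixes A B C :: "'a::real_vector"
  assumes "subspace P" "\<And>X. X \<in> K \<Longrightarrow> X \<in> P \<Longrightarrow> X = 0"
    and "A \<in> K" "B \<in> P" "C \<in> P \<Longrightarrow> C = 0" "s \<noteq> 0"
  shows "((s * s) *\<^sub>R A + s *\<^sub>R B + C = 0 \<and> A = 0) \<longleftrightarrow> (A + B + C = 0 \<and> C = 0)"
proof
  assume h: "(s * s) *\<^sub>R A + s *\<^sub>R B + C = 0 \<and> A = 0"
  then have "A = 0" by simp
  moreover from h this have "C = - (s *\<^sub>R B)" by (simp add: eq_neg_iff_add_eq_0 add.commute)
  moreover have "- (s *\<^sub>R B) \<in> P" using assms(1,4) by (simp add: subspace_neg subspace_scale)
  ultimately show "A + B + C = 0 \<and> C = 0" using assms(5,6) by auto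
next
  assume h: "A + B + C = 0 \<and> C = 0"
  then have "C = 0" by simp
  moreover from h this have "A = - B" by (simp add: eq_neg_iff_add_eq_0)
  moreover have "- B \<in> P" using assms(1,4) by (simp add: subspace_neg)
  ultimately have "A = 0" using assms(2,3) by metis
  with \<open>A = - B\<close> \<open>C = 0\<close> show "(s * s) *\<^sub>R A + s *\<^sub>R B + C = 0 \<and> A = 0" by simp
qed

theorem mainTheorem8:
  fixes i :: "real^7" and t :: real and X Y :: "real^7^7"
  assumes "norm i = 1" and "t > 0" and "X \<in> g2" and "Y \<in> g2"
  shows "(lie_br (phi t i X) (phi t i Y) = 0 \<and> lie_br (proj_k i X) (proj_k i Y) = 0) \<longleftrightarrow>
         (lie_br X Y = 0 \<and> lie_br (proj_p i X) (proj_p i Y) = 0)"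
proof -
  have i: "inner i i = 1" using assms(1) by (simp add: norm_eq_1)
  note k = proj_k_in_k_alg[OF i] and p = proj_p_in_p_alg[OF i]
  define s where "s = t / (t + 1)"
  have "lie_br (phi t i X) (phi t i Y) = (s * s) *\<^sub>R lie_br (proj_k i X) (proj_k i Y)
      + s *\<^sub>R (lie_br (proj_k i X) (proj_p i Y) + lie_br (proj_p i X) (proj_k i Y))
      + lie_br (proj_p i X) (proj_p i Y)"
    unfolding phi_def s_def by (rule lie_br_expand)
  moreover have "lie_br X Y = lie_br (proj_k i X) (proj_k i Y)
      + (lie_br (proj_k i X) (proj_p i Y) + lie_br (proj_p i X) (proj_k i Y))
      + lie_br (proj_p i X) (proj_p i Y)"
    using lie_br_expand[of 1 "proj_k i X" "proj_p i X" "proj_k i Y" "proj_p i Y"]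
    by (simp add: proj_p_def)
  moreover have "lie_br (proj_k i X) (proj_p i Y) + lie_br (proj_p i X) (proj_k i Y) \<in> p_alg i"
    using lie_br_k_alg_p_alg[OF k[OF assms(3)] p[OF assms(4)]]
      lie_br_k_alg_p_alg[OF k[OF assms(4)] p[OF assms(3)]] subspace_p_alg
    by (metis lie_br_def minus_diff_eq subspace_add subspace_neg)
  moreover have "s \<noteq> 0" using assms(2) by (simp add: s_def)
  ultimately show ?thesis
    using graded_sum_vanishing[OF subspace_p_alg k_alg_p_alg_eq_0
        k_alg_lie_br[OF k[OF assms(3)] k[OF assms(4)]]]
      p_alg_lie_br_in_p_alg_eq_0[OF i p[OF assms(3)] p[OF assms(4)]]
    by simp
qed

end
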